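(* In the finite-inventory setting described in the context, for every season $n$ and period $t\in\{1,\dots,T\}$, \[ |\Delta_t^n|\le 2\|\widehat V_n-V^*\|_\infty+(T-t+1)\,R_{\max}\,\delta_n . \]
   Context: States are $x=(s,t)$ with $s\in\{0,\dots,C\}$, $t\in\{1,\dots,T+1\}$; $\mathcal{X}$ is the set of all states with $t\le T+1$. From state $(s,t)$, a price $p\in[p_l,p_h]$ ($0<p_l<p_h$) yields sales $q\in\{0,\dots,s\}$ with true probability $P(q\mid s,p)$, reward $pq$, next state $(s-q,t+1)$. $R_{\max}=p_hC$. $V^*(s,T+1)=0$, $V^*(s,t)=\max_{p}\sum_{q=0}^sP(q\mid s,p)[pq+V^*(s-q,t+1)]$. For season $n$, $\widehat P_n(\cdot\mid s,p)$ is an estimated sales distribution on $\{0,\dots,s\}$ (obtained by discretizing a Gaussian with the GP posterior mean and variance at $p$), $\widehat V_n(s,T+1)=0$, $\widehat V_n(s,t)=\max_{p}\sum_{q=0}^s\widehat P_n(q\mid s,p)[pq+\widehat V_n(s-q,t+1)]$, and the policy $\psi$ in season $n$ selects at $(s,t)$ a price attaining this maximum. $\|\widehat V_n-V^*\|_\infty=\max_{x\in\mathcal{X}}|\widehat V_n(x)-V^*(x)|$, and $\delta_n=\sup_{(s,t)\in\mathcal{X},\,p\in[p_l,p_h]}\|\widehat P_n(\cdot\mid s,p)-P(\cdot\mid s,p)\|_1$. In season $n$, the random states $X_t^n=(S_t^n,t)$ evolve under $P$ with prices from $\psi$, starting at $X_1^n=(C,1)$, with rewards $r_t^n$; $\mathbb{E}_\psi$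 is the corresponding expectation, and $\Delta_t^n=\mathbb{E}_\psi\big[V^*(X_t^n)-\mathbb{E}_\psi[r_t^n+V^*(X_{t+1}^n)\mid X_t^n]\big]$. *)

theory Defs
  imports "HOL-Probability.Probability"
begin

text \<open>Sales model: Pm s p is the sales distribution on {0..s} at inventory s and price p.
  Value function with k remaining periods (k = T+1-t), i.e. value at state (s,t).\<close>

fun vfun :: "(nat \<Rightarrow> real \<Rightarrow> nat pmf) \<Rightarrow> real \<Rightarrow> real \<Rightarrow> nat \<Rightarrow> nat \<Rightarrow> real" where
  "vfun Pm pl ph 0 s = 0"
| "vfun Pm pl ph (Suc k) s =
     (SUP p\<in>{pl..ph}. measure_pmf.expectation (Pm s p)
        (\<lambda>q. p * real q + vfun Pm pl ph k (s - q)))"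

definition Vval :: "(nat \<Rightarrow> real \<Rightarrow> nat pmf) \<Rightarrow> real \<Rightarrow> real \<Rightarrow> nat \<Rightarrow> nat \<Rightarrow> nat \<Rightarrow> real" where
  "Vval Pm pl ph T s t = vfun Pm pl ph (T + 1 - t) s"

definition Qval :: "(nat \<Rightarrow> real \<Rightarrow> nat pmf) \<Rightarrow> (nat \<Rightarrow> nat \<Rightarrow> real) \<Rightarrow> nat \<Rightarrow> nat \<Rightarrow> real \<Rightarrow> real" where
  "Qval Pm V s t p = measure_pmf.expectation (Pm s p) (\<lambda>q. p * real q + V (s - q) (t + 1))"

text \<open>Distribution of the inventory S_{k+1} under the true model P and policy psi, S_1 = C.\<close>
primrec sdist :: "(nat \<Rightarrow> real \<Rightarrow> nat pmf) \<Rightarrow> (nat \<Rightarrow> nat \<Rightarrow> real) \<Rightarrow> nat \<Rightarrow> nat \<Rightarrow> nat pmf" where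
  "sdist P psi C 0 = return_pmf C"
| "sdist P psi C (Suc k) =
     bind_pmf (sdist P psi C k) (\<lambda>s. map_pmf (\<lambda>q. s - q) (P s (psi s (Suc k))))"

definition Sdist :: "(nat \<Rightarrow> real \<Rightarrow> nat pmf) \<Rightarrow> (nat \<Rightarrow> nat \<Rightarrow> real) \<Rightarrow> nat \<Rightarrow> nat \<Rightarrow> nat pmf" where
  "Sdist P psi C t = sdist P psi C (t - 1)"

definition Delta :: "(nat \<Rightarrow> real \<Rightarrow> nat pmf) \<Rightarrow> real \<Rightarrow> real \<Rightarrow> nat \<Rightarrow> nat \<Rightarrow> (nat \<Rightarrow> nat \<Rightarrow> real) \<Rightarrow> nat \<Rightarrow> real" where
  "Delta P pl ph T C psi t = measure_pmf.expectation (Sdist P psi C t)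
     (\<lambda>s. Vval P pl ph T s t - Qval P (Vval P pl ph T) s t (psi s t))"

definition l1dist :: "nat \<Rightarrow> nat pmf \<Rightarrow> nat pmf \<Rightarrow> real" where
  "l1dist s A B = (\<Sum>q\<le>s. \<bar>pmf A q - pmf B q\<bar>)"

definition states :: "nat \<Rightarrow> nat \<Rightarrow> (nat \<times> nat) set" where
  "states C T = {..C} \<times> {1..T+1}"

definition supnorm :: "nat \<Rightarrow> nat \<Rightarrow> (nat \<Rightarrow> nat \<Rightarrow> real) \<Rightarrow> (nat \<Rightarrow> nat \<Rightarrow> real) \<Rightarrow> real" where
  "supnorm C T V W = (MAX x\<in>states C T. \<bar>V (fst x) (snd x) - W (fst x) (snd x)\<bar>)"

definition deltaP :: "nat \<Rightarrow> nat \<Rightarrow> real \<Rightarrow> real \<Rightarrow> (nat \<Rightarrow> real \<Rightarrow> nat pmf) \<Rightarrow> (nat \<Rightarrow> real \<Rightarrow> nat pmf) \<Rightarrow> real" where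
  "deltaP C T pl ph Ph P = (SUP x\<in>{(s,t,p). (s,t) \<in> states C T \<and> p \<in> {pl..ph}}.
      l1dist (fst x) (Ph (fst x) (snd (snd x))) (P (fst x) (snd (snd x))))"

end

theory Submission
  imports Defs
begin

text \<open>For the greedy price p at inventory s we have Qhat(s,p) = Vhat(s), so the Bellman
  residual V*(s) - Q[V*](s,p) of the true value function splits into V*(s) - Vhat(s), plus
  Qhat[Vhat](s,p) - Q[Vhat](s,p) (same continuation, two sales models), plus
  Q[Vhat](s,p) - Q[V*](s,p) (same sales model, two continuations). The outer terms are bounded
  by the sup-distance of the value functions, the middle one by the L1 distance of the sales
  distributions times a bound on the integrand pq + Vhat(s-q,t+1); that bound is (T-t+1) R_max
  because a value function with k periods left is at most k ph s. Averaging the pointwise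
  bound over the law of S_t gives the claim.\<close>

lemma pmf_expectation_bounds:
  fixes f :: "'a \<Rightarrow> real"
  assumes "finite (set_pmf M)" and "\<And>x. x \<in> set_pmf M \<Longrightarrow> a \<le> f x \<and> f x \<le> b"
  shows "a \<le> measure_pmf.expectation M f \<and> measure_pmf.expectation M f \<le> b"
proof -
  have "integrable M f" using assms(1) by (rule integrable_measure_pmf_finite)
  moreover have "AE x in M. a \<le> f x" "AE x in M. f x \<le> b"
    using assms(2) by (auto simp: AE_measure_pmf_iff)
  ultimately show ?thesis
    by (auto intro: measure_pmf.integral_ge_const measure_pmf.integral_le_const)
qed

lemma abs_pmf_expectation_le:
  fixes f :: "'a \<Rightarrow> real"
  assumes "finite (set_pmf M)" and "\<And>x. x \<in> set_pmf M \<Longrightarrow> \<bar>f x\<bar> \<le> b"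
  shows "\<bar>measure_pmf.expectation M f\<bar> \<le> b"
proof -
  have "- b \<le> measure_pmf.expectation M f \<and> measure_pmf.expectation M f \<le> b"
    using assms(1) by (rule pmf_expectation_bounds) (use assms(2) in \<open>force simp: abs_le_iff\<close>)
  then show ?thesis by (simp add: abs_le_iff)
qed

lemma abs_pmf_expectation_diff_le_l1dist:
  fixes f :: "nat \<Rightarrow> real"
  assumes A: "set_pmf A \<subseteq> {..s}" and B: "set_pmf B \<subseteq> {..s}"
    and f: "\<And>q. q \<le> s \<Longrightarrow> \<bar>f q\<bar> \<le> b"
  shows "\<bar>measure_pmf.expectation A f - measure_pmf.expectation B f\<bar> \<le> b * l1dist s A B"
proof -
  have "measure_pmf.expectation A f - measure_pmf.expectation B f
      = (\<Sum>q\<le>s. (pmf A q - pmf B q) * f q)"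
    using A B by (simp add: integral_measure_pmf_real[where A = "{..s}"] subset_eq
        sum_subtractf[symmetric] algebra_simps)
  also have "\<bar>\<dots>\<bar> \<le> (\<Sum>q\<le>s. \<bar>pmf A q - pmf B q\<bar> * b)"
    by (rule order_trans[OF sum_abs], rule sum_mono) (simp add: abs_mult f mult_left_mono)
  also have "\<dots> = b * l1dist s A B"
    by (simp add: l1dist_def sum_distrib_left mult.commute)
  finally show ?thesis .
qed

lemma l1dist_le_2:
  assumes "set_pmf A \<subseteq> {..s}" and "set_pmf B \<subseteq> {..s}"
  shows "l1dist s A B \<le> 2"
proof -
  have "l1dist s A B \<le> (\<Sum>q\<le>s. pmf A q + pmf B q)"
    unfolding l1dist_def by (rule sum_mono) (simp add: abs_le_iff)
  also have "\<dots> = 2"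
    using sum_pmf_eq_1[of "{..s}" A] sum_pmf_eq_1[of "{..s}" B] assms by (simp add: sum.distrib)
  finally show ?thesis .
qed

lemma l1dist_le_deltaP:
  assumes Ph_supp: "\<And>s p. s \<le> C \<Longrightarrow> p \<in> {pl..ph} \<Longrightarrow> set_pmf (Ph s p) \<subseteq> {..s}"
    and P_supp: "\<And>s p. s \<le> C \<Longrightarrow> p \<in> {pl..ph} \<Longrightarrow> set_pmf (P s p) \<subseteq> {..s}"
    and "s \<le> C" and "p \<in> {pl..ph}"
  shows "l1dist s (Ph s p) (P s p) \<le> deltaP C T pl ph Ph P"
proof -
  let ?A = "{(s,t,p). (s,t) \<in> states C T \<and> p \<in> {pl..ph}}"
  let ?f = "\<lambda>x. l1dist (fst x) (Ph (fst x) (snd (snd x))) (P (fst x) (snd (snd x)))"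
  have "?f x \<le> 2" if "x \<in> ?A" for x
    using that by (clarsimp simp: states_def) (intro l1dist_le_2 Ph_supp P_supp; simp)
  then have "bdd_above (?f ` ?A)" by (intro bdd_aboveI2)
  moreover have "(s, 1, p) \<in> ?A" using assms(3,4) by (auto simp: states_def)
  ultimately show ?thesis
    unfolding deltaP_def by (metis (no_types, lifting) cSUP_upper fst_conv snd_conv)
qed

lemma abs_diff_le_supnorm:
  assumes "s \<le> C" and "1 \<le> t" and "t \<le> T + 1"
  shows "\<bar>V s t - W s t\<bar> \<le> supnorm C T V W"
proof -
  have "finite (states C T)" and "(s, t) \<in> states C T"
    using assms by (auto simp: states_def)
  then show ?thesis
    unfolding supnorm_def by (metis (no_types, lifting) Max_ge finite_imageI fst_conv image_eqI snd_conv)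
qed

lemma vfun_bounds:
  assumes supp: "\<And>s p. s \<le> C \<Longrightarrow> p \<in> {pl..ph} \<Longrightarrow> set_pmf (Pm s p) \<subseteq> {..s}"
    and "0 \<le> pl" and "pl \<le> ph" and "s \<le> C"
  shows "0 \<le> vfun Pm pl ph k s \<and> vfun Pm pl ph k s \<le> real k * ph * real s"
  using \<open>s \<le> C\<close>
proof (induction k arbitrary: s)
  case 0
  then show ?case by simp
next
  case (Suc k)
  define g where
    "g p = measure_pmf.expectation (Pm s p) (\<lambda>q. p * real q + vfun Pm pl ph k (s - q))" for p
  have g: "0 \<le> g p \<and> g p \<le> real (Suc k) * ph * real s" if p: "p \<in> {pl..ph}" for p
    unfolding g_def
  proof (rule pmf_expectation_bounds)
    have "set_pmf (Pm s p) \<subseteq> {..s}" using supp Suc.prems p by auto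
    then show "finite (set_pmf (Pm s p))" by (rule finite_subset) simp
    fix q assume "q \<in> set_pmf (Pm s p)"
    with \<open>set_pmf (Pm s p) \<subseteq> {..s}\<close> have q: "q \<le> s" by auto
    have "0 \<le> vfun Pm pl ph k (s - q)" "vfun Pm pl ph k (s - q) \<le> real k * ph * real (s - q)"
      using Suc.IH[of "s - q"] Suc.prems by auto
    moreover have "real k * ph * real (s - q) \<le> real k * ph * real s"
      using p \<open>0 \<le> pl\<close> by (intro mult_left_mono) auto
    moreover have "0 \<le> p * real q" "p * real q \<le> ph * real s"
      using p q \<open>0 \<le> pl\<close> by (auto intro: mult_mono)
    ultimately show "0 \<le> p * real q + vfun Pm pl ph k (s - q)
        \<and> p * real q + vfun Pm pl ph k (s - q) \<le> real (Suc k) * ph * real s"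
      by (simp add: algebra_simps)
  qed
  have ne: "{pl..ph} \<noteq> {}" using assms by auto
  have bdd: "bdd_above (g ` {pl..ph})"
    using g by (intro bdd_aboveI2[where M = "real (Suc k) * ph * real s"]) auto
  have "0 \<le> (SUP p\<in>{pl..ph}. g p)"
    using g[of pl] assms by (intro cSUP_upper2[OF bdd, of pl]) auto
  moreover have "(SUP p\<in>{pl..ph}. g p) \<le> real (Suc k) * ph * real s"
    using g by (intro cSUP_least[OF ne]) auto
  ultimately show ?case by (simp add: g_def)
qed

lemma set_pmf_sdist_subset: "set_pmf (sdist P psi C k) \<subseteq> {..C}"
  by (induction k) auto

lemma abs_Qval_diff_le:
  assumes "set_pmf (Pm s p) \<subseteq> {..s}"
    and "\<And>q. q \<le> s \<Longrightarrow> \<bar>V (s - q) (t + 1) - W (s - q) (t + 1)\<bar> \<le> e"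
  shows "\<bar>Qval Pm V s t p - Qval Pm W s t p\<bar> \<le> e"
proof -
  have fin: "finite (set_pmf (Pm s p))" using assms(1) by (rule finite_subset) simp
  have "Qval Pm V s t p - Qval Pm W s t p
      = measure_pmf.expectation (Pm s p) (\<lambda>q. V (s - q) (t + 1) - W (s - q) (t + 1))"
    unfolding Qval_def using fin by (simp add: integral_diff[symmetric] integrable_measure_pmf_finite)
  also have "\<bar>\<dots>\<bar> \<le> e"
    using fin assms by (intro abs_pmf_expectation_le) auto
  finally show ?thesis .
qed

lemma abs_Bellman_residual_of_greedy_le:
  fixes P Ph :: "nat \<Rightarrow> real \<Rightarrow> nat pmf"
  assumes "0 \<le> pl" and "pl \<le> ph"
    and P_supp: "\<And>s p. s \<le> C \<Longrightarrow> p \<in> {pl..ph} \<Longrightarrow> set_pmf (P s p) \<subseteq> {..s}"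
    and Ph_supp: "\<And>s p. s \<le> C \<Longrightarrow> p \<in> {pl..ph} \<Longrightarrow> set_pmf (Ph s p) \<subseteq> {..s}"
    and s: "s \<le> C" and t: "1 \<le> t" "t \<le> T" and p: "p \<in> {pl..ph}"
    and greedy: "Qval Ph (Vval Ph pl ph T) s t p = Vval Ph pl ph T s t"
  shows "\<bar>Vval P pl ph T s t - Qval P (Vval P pl ph T) s t p\<bar>
    \<le> 2 * supnorm C T (Vval Ph pl ph T) (Vval P pl ph T)
      + real (T - t + 1) * (ph * real C) * deltaP C T pl ph Ph P"
proof -
  define Vh where "Vh = Vval Ph pl ph T"
  define V where "V = Vval P pl ph T"
  define N where "N = supnorm C T Vh V"
  define R where "R = real (T - t + 1) * (ph * real C)"
  have "\<bar>V s t - Vh s t\<bar> \<le> N"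
    using abs_diff_le_supnorm[OF s, of t T Vh V] t by (simp add: N_def abs_minus_commute)
  moreover have "\<bar>Qval Ph Vh s t p - Qval P Vh s t p\<bar> \<le> R * deltaP C T pl ph Ph P"
  proof -
    have "\<bar>p * real q + Vh (s - q) (t + 1)\<bar> \<le> R" if q: "q \<le> s" for q
    proof -
      have "0 \<le> Vh (s - q) (t + 1)" "Vh (s - q) (t + 1) \<le> real (T - t) * ph * real (s - q)"
        using vfun_bounds[OF Ph_supp \<open>0 \<le> pl\<close> \<open>pl \<le> ph\<close>, where s = "s - q" and k = "T - t"] s
        by (auto simp: Vh_def Vval_def)
      moreover have "real (T - t) * ph * real (s - q) \<le> real (T - t) * ph * real C"
        using q s \<open>0 \<le> pl\<close> \<open>pl \<le> ph\<close> by (intro mult_left_mono) auto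
      moreover have "0 \<le> p * real q" "p * real q \<le> ph * real C"
        using p q s \<open>0 \<le> pl\<close> by (auto intro: mult_mono)
      moreover have "R = real (T - t) * ph * real C + ph * real C"
        using t by (simp add: R_def algebra_simps)
      ultimately show ?thesis by (simp add: abs_le_iff)
    qed
    then have "\<bar>Qval Ph Vh s t p - Qval P Vh s t p\<bar> \<le> R * l1dist s (Ph s p) (P s p)"
      unfolding Qval_def by (intro abs_pmf_expectation_diff_le_l1dist Ph_supp P_supp s p)
    also have "\<dots> \<le> R * deltaP C T pl ph Ph P"
      using l1dist_le_deltaP[OF Ph_supp P_supp s p] \<open>0 \<le> pl\<close> \<open>pl \<le> ph\<close>
      by (intro mult_left_mono) (auto simp: R_def)
    finally show ?thesis .
  qed
  moreover have "\<bar>Qval P Vh s t p - Qval P V s t p\<bar> \<le> N"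
    using s t by (intro abs_Qval_diff_le P_supp p) (auto simp: N_def intro: abs_diff_le_supnorm)
  ultimately show ?thesis
    using greedy by (simp add: Vh_def V_def N_def R_def abs_le_iff)
qed


theorem lemma3:
  fixes C T :: nat and pl ph :: real
    and P :: "nat \<Rightarrow> real \<Rightarrow> nat pmf"
    and Phat :: "nat \<Rightarrow> nat \<Rightarrow> real \<Rightarrow> nat pmf"
    and psi :: "nat \<Rightarrow> nat \<Rightarrow> nat \<Rightarrow> real"
  assumes "0 < pl" and "pl < ph"
    and P_supp: "\<And>s p. s \<le> C \<Longrightarrow> p \<in> {pl..ph} \<Longrightarrow> set_pmf (P s p) \<subseteq> {..s}"
    and Phat_supp: "\<And>n s p. s \<le> C \<Longrightarrow> p \<in> {pl..ph} \<Longrightarrow> set_pmf (Phat n s p) \<subseteq> {..s}"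
    and psi_range: "\<And>n s t. s \<le> C \<Longrightarrow> 1 \<le> t \<Longrightarrow> t \<le> T \<Longrightarrow> psi n s t \<in> {pl..ph}"
    and psi_opt: "\<And>n s t. s \<le> C \<Longrightarrow> 1 \<le> t \<Longrightarrow> t \<le> T \<Longrightarrow>
        Qval (Phat n) (Vval (Phat n) pl ph T) s t (psi n s t) = Vval (Phat n) pl ph T s t"
    and "1 \<le> t" and "t \<le> T"
  shows "\<bar>Delta P pl ph T C (psi n) t\<bar>
     \<le> 2 * supnorm C T (Vval (Phat n) pl ph T) (Vval P pl ph T)
       + real (T - t + 1) * (ph * real C) * deltaP C T pl ph (Phat n) P"
proof -
  have "set_pmf (Sdist P (psi n) C t) \<subseteq> {..C}"
    by (simp add: Sdist_def set_pmf_sdist_subset)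
  then show ?thesis
    unfolding Delta_def using assms
    by (intro abs_pmf_expectation_le abs_Bellman_residual_of_greedy_le)
      (auto intro: finite_subset)
qed

end
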